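(* Let $\alpha>0$, $\beta,\eta,\kappa\in\mathbb{R}$, $\rho>0$, $p\geq 1$, and $0\le a<x$. Let $f,g$ be two positive functions on $[0,\infty)$ with $f,g\in X^{p}_{c}(a,x)$ (for some $c\in\mathbb{R}$), such that ${}^{\rho}\mathcal{I}^{\alpha,\beta}_{a+,\eta,\kappa}f^{p}(x)<\infty$ and ${}^{\rho}\mathcal{I}^{\alpha,\beta}_{a+,\eta,\kappa}g^{p}(x)<\infty$. Suppose there are real numbers $m,M>0$ with $0<m\leq \frac{f(t)}{g(t)}\leq M$ for all $t\in[a,x]$. Define, for $t\in[a,x]$, $$h(f(t),g(t))=\max\left\{M\left[\left(\frac{M}{m}+1\right)f(t)-Mg(t)\right],\ \frac{(m+M)g(t)-f(t)}{m}\right\}.$$ Then $$\left({}^{\rho}\mathcal{I}^{\alpha,\beta}_{a+,\eta,\kappa}f^{p}(x)\right)^{1/p}+\left({}^{\rho}\mathcal{I}^{\alpha,\beta}_{a+,\eta,\kappa}g^{p}(x)\right)^{1/p}\leq 2\left({}^{\rho}\mathcal{I}^{\alpha,\beta}_{a+,\eta,\kappa}h^{p}(f,g)(x)\right)^{1/p}.$$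
   Context: For $c\in\mathbb{R}$ and $1\le p<\infty$, $X^{p}_{c}(a,b)$ denotes the space of Lebesgue measurable functions $f$ on $(a,b)$ with $\left(\int_a^b |t^{c}f(t)|^{p}\,\frac{dt}{t}\right)^{1/p}<\infty$. For $\alpha>0$, $\beta,\eta,\kappa\in\mathbb{R}$, $\rho>0$, $0\le a<x$, and a function $\varphi$, the generalized (Katugampola) fractional integral is $${}^{\rho}\mathcal{I}^{\alpha,\beta}_{a+,\eta,\kappa}\varphi(x)=\frac{\rho^{1-\beta}x^{\kappa}}{\Gamma(\alpha)}\int_{a}^{x}\frac{\tau^{\rho(\eta+1)-1}}{(x^{\rho}-\tau^{\rho})^{1-\alpha}}\varphi(\tau)\,d\tau,$$ whenever the integral exists. ${}^{\rho}\mathcal{I}^{\alpha,\beta}_{a+,\eta,\kappa}h^{p}(f,g)(x)$ denotes the operator applied to $\tau\mapsto h(f(\tau),g(\tau))^p$, evaluated at $x$. *)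

theory Defs
  imports "HOL-Analysis.Analysis"
begin

definition Xpc :: "real \<Rightarrow> real \<Rightarrow> real \<Rightarrow> real \<Rightarrow> (real \<Rightarrow> real) \<Rightarrow> bool" where
  "Xpc c p a b f \<longleftrightarrow>
     set_borel_measurable lebesgue {a<..<b} f \<and>
     (\<integral>\<^sup>+ t \<in> {a<..<b}. ennreal (\<bar>t powr c * f t\<bar> powr p / t) \<partial>lebesgue) < \<infinity>"

definition katu_kernel :: "real \<Rightarrow> real \<Rightarrow> real \<Rightarrow> real \<Rightarrow> real \<Rightarrow> real" where
  "katu_kernel \<rho> \<alpha> \<eta> x \<tau> =
     \<tau> powr (\<rho> * (\<eta> + 1) - 1) / (x powr \<rho> - \<tau> powr \<rho>) powr (1 - \<alpha>)"

definition katu_exists :: "real \<Rightarrow> real \<Rightarrow> real \<Rightarrow> real \<Rightarrow> (real \<Rightarrow> real) \<Rightarrow> real \<Rightarrow> bool" where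
  "katu_exists \<rho> \<alpha> \<eta> a \<phi> x \<longleftrightarrow>
     set_integrable lebesgue {a..x} (\<lambda>\<tau>. katu_kernel \<rho> \<alpha> \<eta> x \<tau> * \<phi> \<tau>)"

text \<open>Generalized (Katugampola) fractional integral
  rho-I^{alpha,beta}_{a+,eta,kappa} phi (x).\<close>
definition katu_int :: "real \<Rightarrow> real \<Rightarrow> real \<Rightarrow> real \<Rightarrow> real \<Rightarrow> real \<Rightarrow> (real \<Rightarrow> real) \<Rightarrow> real \<Rightarrow> real" where
  "katu_int \<rho> \<alpha> \<beta> \<eta> \<kappa> a \<phi> x =
     \<rho> powr (1 - \<beta>) * x powr \<kappa> / Gamma \<alpha> *
     (\<integral>\<tau>\<in>{a..x}. katu_kernel \<rho> \<alpha> \<eta> x \<tau> * \<phi> \<tau> \<partial>lebesgue)"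

end

theory Submission
  imports Defs
begin

text \<open>Pointwise, the ratio bounds give \<open>f \<le> h\<close>, \<open>g \<le> h\<close> and \<open>h \<le> K f\<close> for a constant \<open>K\<close>.
  The last bound makes \<open>h\<^sup>p\<close> admissible for the fractional integral, and the first two,
  together with the positivity of the kernel and of the constant factor, make the fractional
  integral of \<open>h\<^sup>p\<close> dominate those of \<open>f\<^sup>p\<close> and \<open>g\<^sup>p\<close>; taking \<open>p\<close>-th roots and adding gives
  the inequality.\<close>

definition ratio_majorant :: "real \<Rightarrow> real \<Rightarrow> real \<Rightarrow> real \<Rightarrow> real" where
  "ratio_majorant m M u v = max (M * ((M / m + 1) * u - M * v)) (((m + M) * v - u) / m)"

context
  fixes m M u v :: real
  assumes m_pos: "m > 0" and M_pos: "M > 0" and v_nonneg: "v \<ge> 0"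
    and lower: "m * v \<le> u" and upper: "u \<le> M * v"
begin

lemma ratio_bounded_nonneg: "u \<ge> 0"
  using m_pos v_nonneg lower by (smt (verit) mult_nonneg_nonneg)

lemma ratio_majorant_ge_right: "v \<le> ratio_majorant m M u v"
proof -
  have "v \<le> ((m + M) * v - u) / m"
    using m_pos upper by (simp add: field_simps)
  then show ?thesis
    unfolding ratio_majorant_def by simp
qed

lemma ratio_majorant_ge_left: "u \<le> ratio_majorant m M u v"
proof (cases "M \<ge> 1")
  case True
  have "M * M * v \<le> (M * M / m) * u"
    using mult_left_mono[OF lower, of "M * M / m"] m_pos M_pos by (simp add: field_simps)
  moreover have "u \<le> M * u"
    using True ratio_bounded_nonneg mult_right_mono[of 1 M u] by simp
  ultimately have "u \<le> M * ((M / m + 1) * u - M * v)"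
    by (simp add: algebra_simps)
  then show ?thesis
    unfolding ratio_majorant_def by simp
next
  case False
  have "u \<le> v"
    using False v_nonneg upper mult_right_mono[of M 1 v] by linarith
  then have "m * u + u \<le> m * v + M * v"
    using m_pos upper by (smt (verit) mult_left_mono)
  then have "u \<le> ((m + M) * v - u) / m"
    using m_pos by (simp add: field_simps)
  then show ?thesis
    unfolding ratio_majorant_def by simp
qed

lemma ratio_majorant_le: "ratio_majorant m M u v \<le> max (M * (M / m + 1)) ((m + M) / m\<^sup>2) * u"
proof -
  let ?K = "max (M * (M / m + 1)) ((m + M) / m\<^sup>2)"
  have first: "M * ((M / m + 1) * u - M * v) \<le> M * (M / m + 1) * u"
    using M_pos v_nonneg by (simp add: algebra_simps)
  have "(m + M) * v \<le> (m + M) * (u / m)"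
    using m_pos M_pos lower by (intro mult_left_mono) (simp_all add: field_simps)
  then have "((m + M) * v - u) / m \<le> (m + M) * (u / m) / m"
    using m_pos ratio_bounded_nonneg by (intro divide_right_mono) auto
  also have "\<dots> = (m + M) / m\<^sup>2 * u"
    by (simp add: power2_eq_square)
  finally have second: "((m + M) * v - u) / m \<le> (m + M) / m\<^sup>2 * u" .
  have "M * (M / m + 1) * u \<le> ?K * u" "(m + M) / m\<^sup>2 * u \<le> ?K * u"
    using ratio_bounded_nonneg by (intro mult_right_mono; simp)+
  then show ?thesis
    using first second unfolding ratio_majorant_def by linarith
qed

lemma ratio_majorant_powr_bounds:
  assumes "p \<ge> 0"
  shows "u powr p \<le> ratio_majorant m M u v powr p"
    and "v powr p \<le> ratio_majorant m M u v powr p"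
    and "ratio_majorant m M u v powr p \<le> max (M * (M / m + 1)) ((m + M) / m\<^sup>2) powr p * u powr p"
proof -
  show "u powr p \<le> ratio_majorant m M u v powr p" "v powr p \<le> ratio_majorant m M u v powr p"
    using assms ratio_majorant_ge_left ratio_majorant_ge_right ratio_bounded_nonneg v_nonneg
    by (auto intro: powr_mono2)
  have "ratio_majorant m M u v powr p \<le> (max (M * (M / m + 1)) ((m + M) / m\<^sup>2) * u) powr p"
    using assms ratio_majorant_le ratio_majorant_ge_left ratio_bounded_nonneg
    by (intro powr_mono2) auto
  also have "\<dots> = max (M * (M / m + 1)) ((m + M) / m\<^sup>2) powr p * u powr p"
    using ratio_bounded_nonneg by (simp add: powr_mult)
  finally show "ratio_majorant m M u v powr p \<le> max (M * (M / m + 1)) ((m + M) / m\<^sup>2) powr p * u powr p" .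
qed

end

lemma Xpc_set_borel_measurable_closed:
  assumes "Xpc c p a b f" and "a < b"
  shows "set_borel_measurable lebesgue {a..b} f"
proof -
  have open_part: "(\<lambda>t. indicator {a<..<b} t *\<^sub>R f t) \<in> borel_measurable lebesgue"
    using assms(1) unfolding Xpc_def set_borel_measurable_def by auto
  have "(\<lambda>t. indicator {a..b} t *\<^sub>R f t) =
      (\<lambda>t. indicator {a<..<b} t *\<^sub>R f t + indicator {a} t * f a + indicator {b} t * f b)"
    using assms(2) by (auto simp: indicator_def fun_eq_iff)
  also have "\<dots> \<in> borel_measurable lebesgue"
    using open_part by (intro borel_measurable_add borel_measurable_times borel_measurable_indicator) auto
  finally show ?thesis
    unfolding set_borel_measurable_def .
qed

lemma set_borel_measurable_iff_restrict_space:
  fixes f :: "'a \<Rightarrow> 'b::real_normed_vector"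
  assumes "S \<in> sets M"
  shows "set_borel_measurable M S f \<longleftrightarrow> f \<in> borel_measurable (restrict_space M S)"
  using assms unfolding set_borel_measurable_def
  by (subst borel_measurable_restrict_space_iff) auto

lemma set_borel_measurable_ratio_majorant_powr:
  assumes S: "S \<in> sets M"
    and "set_borel_measurable M S f" and "set_borel_measurable M S g"
  shows "set_borel_measurable M S (\<lambda>t. ratio_majorant m M' (f t) (g t) powr p)"
proof -
  note [measurable] = assms(2,3)[unfolded set_borel_measurable_iff_restrict_space[OF S]]
  show ?thesis
    unfolding set_borel_measurable_iff_restrict_space[OF S] ratio_majorant_def by measurable
qed

lemma katu_kernel_nonneg: "katu_kernel \<rho> \<alpha> \<eta> x \<tau> \<ge> 0"
  unfolding katu_kernel_def by simp

lemma katu_kernel_borel_measurable: "katu_kernel \<rho> \<alpha> \<eta> x \<in> borel_measurable lebesgue"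
proof -
  have "katu_kernel \<rho> \<alpha> \<eta> x \<in> borel_measurable borel"
    unfolding katu_kernel_def by measurable
  then show ?thesis
    using measurable_compose[OF id_borel_measurable_lebesgue] by (simp add: o_def)
qed

lemma katu_exists_dominated:
  assumes "katu_exists \<rho> \<alpha> \<eta> a \<phi> x"
    and "set_borel_measurable lebesgue {a..x} \<psi>"
    and "\<And>t. t \<in> {a..x} \<Longrightarrow> \<bar>\<psi> t\<bar> \<le> K * \<phi> t"
  shows "katu_exists \<rho> \<alpha> \<eta> a \<psi> x"
  unfolding katu_exists_def
proof (rule set_integrable_bound)
  let ?k = "katu_kernel \<rho> \<alpha> \<eta> x"
  show "set_integrable lebesgue {a..x} (\<lambda>t. K * (?k t * \<phi> t))"
    using assms(1) unfolding katu_exists_def by simp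
  have interval: "{a..x} \<in> sets lebesgue"
    by simp
  show "set_borel_measurable lebesgue {a..x} (\<lambda>t. ?k t * \<psi> t)"
    using assms(2) measurable_restrict_space1[OF katu_kernel_borel_measurable]
    unfolding set_borel_measurable_iff_restrict_space[OF interval]
    by (rule borel_measurable_times[rotated])
  have "norm (?k t * \<psi> t) \<le> norm (K * (?k t * \<phi> t))" if "t \<in> {a..x}" for t
  proof -
    have "norm (?k t * \<psi> t) = ?k t * \<bar>\<psi> t\<bar>"
      by (simp add: abs_mult katu_kernel_nonneg)
    also have "\<dots> \<le> ?k t * (K * \<phi> t)"
      using assms(3)[OF that] katu_kernel_nonneg by (rule mult_left_mono)
    also have "\<dots> \<le> norm (K * (?k t * \<phi> t))"
      by (simp add: mult_ac)
    finally show ?thesis .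
  qed
  then show "AE t in lebesgue. t \<in> {a..x} \<longrightarrow> norm (?k t * \<psi> t) \<le> norm (K * (?k t * \<phi> t))"
    by simp
qed

lemma katu_int_factor_nonneg:
  fixes \<alpha> \<beta> \<kappa> \<rho> x :: real
  assumes "\<alpha> > 0"
  shows "\<rho> powr (1 - \<beta>) * x powr \<kappa> / Gamma \<alpha> \<ge> 0"
  using Gamma_real_pos[OF assms] by (simp add: zero_le_divide_iff)

lemma katu_int_nonneg:
  assumes "\<alpha> > 0" and "\<And>t. t \<in> {a..x} \<Longrightarrow> \<phi> t \<ge> 0"
  shows "katu_int \<rho> \<alpha> \<beta> \<eta> \<kappa> a \<phi> x \<ge> 0"
proof -
  have "(\<integral>\<tau>\<in>{a..x}. katu_kernel \<rho> \<alpha> \<eta> x \<tau> * \<phi> \<tau> \<partial>lebesgue) \<ge> 0"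
    unfolding set_lebesgue_integral_def using assms(2) katu_kernel_nonneg
    by (intro Bochner_Integration.integral_nonneg) (simp add: indicator_def)
  then show ?thesis
    unfolding katu_int_def by (intro mult_nonneg_nonneg katu_int_factor_nonneg assms(1))
qed

lemma katu_int_mono:
  assumes "\<alpha> > 0"
    and "katu_exists \<rho> \<alpha> \<eta> a \<phi> x" and "katu_exists \<rho> \<alpha> \<eta> a \<psi> x"
    and "\<And>t. t \<in> {a..x} \<Longrightarrow> \<phi> t \<le> \<psi> t"
  shows "katu_int \<rho> \<alpha> \<beta> \<eta> \<kappa> a \<phi> x \<le> katu_int \<rho> \<alpha> \<beta> \<eta> \<kappa> a \<psi> x"
proof -
  have "(\<integral>\<tau>\<in>{a..x}. katu_kernel \<rho> \<alpha> \<eta> x \<tau> * \<phi> \<tau> \<partial>lebesgue)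
      \<le> (\<integral>\<tau>\<in>{a..x}. katu_kernel \<rho> \<alpha> \<eta> x \<tau> * \<psi> \<tau> \<partial>lebesgue)"
    using assms(2,3,4) katu_kernel_nonneg unfolding katu_exists_def
    by (intro set_integral_mono) (auto intro: mult_left_mono)
  then show ?thesis
    unfolding katu_int_def using katu_int_factor_nonneg[OF assms(1)] by (intro mult_left_mono)
qed

lemma katu_int_powr_mono:
  assumes "\<alpha> > 0" and "q \<ge> 0"
    and "katu_exists \<rho> \<alpha> \<eta> a \<phi> x" and "katu_exists \<rho> \<alpha> \<eta> a \<psi> x"
    and "\<And>t. t \<in> {a..x} \<Longrightarrow> 0 \<le> \<phi> t" and "\<And>t. t \<in> {a..x} \<Longrightarrow> \<phi> t \<le> \<psi> t"
  shows "katu_int \<rho> \<alpha> \<beta> \<eta> \<kappa> a \<phi> x powr q \<le> katu_int \<rho> \<alpha> \<beta> \<eta> \<kappa> a \<psi> x powr q"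
  using assms by (intro powr_mono2 katu_int_nonneg katu_int_mono) auto

theorem theorem15:
  fixes \<alpha> \<beta> \<eta> \<kappa> \<rho> p a x c m M :: real
    and f g :: "real \<Rightarrow> real"
  assumes "\<alpha> > 0" and "\<rho> > 0" and "p \<ge> 1" and "0 \<le> a" and "a < x"
    and "\<And>t. t \<ge> 0 \<Longrightarrow> f t > 0" and "\<And>t. t \<ge> 0 \<Longrightarrow> g t > 0"
    and "Xpc c p a x f" and "Xpc c p a x g"
    and "katu_exists \<rho> \<alpha> \<eta> a (\<lambda>t. f t powr p) x"
    and "katu_exists \<rho> \<alpha> \<eta> a (\<lambda>t. g t powr p) x"
    and "m > 0" and "M > 0"
    and "\<And>t. t \<in> {a..x} \<Longrightarrow> m \<le> f t / g t \<and> f t / g t \<le> M"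
  shows "let h = (\<lambda>t. max (M * ((M / m + 1) * f t - M * g t)) (((m + M) * g t - f t) / m)) in
     (katu_int \<rho> \<alpha> \<beta> \<eta> \<kappa> a (\<lambda>t. f t powr p) x) powr (1 / p)
     + (katu_int \<rho> \<alpha> \<beta> \<eta> \<kappa> a (\<lambda>t. g t powr p) x) powr (1 / p)
     \<le> 2 * (katu_int \<rho> \<alpha> \<beta> \<eta> \<kappa> a (\<lambda>t. h t powr p) x) powr (1 / p)"
proof -
  let ?h = "\<lambda>t. ratio_majorant m M (f t) (g t)"
  have interval: "{a..x} \<in> sets lebesgue"
    by simp
  have "m * g t \<le> f t" "f t \<le> M * g t" "0 \<le> g t" if "t \<in> {a..x}" for t
    using that assms(4) assms(6,7,14)[of t] by (auto simp: field_simps)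
  note majorant = ratio_majorant_powr_bounds[OF assms(12,13) this(3,1,2), of _ p]
  have "1 / p \<ge> 0" "p \<ge> 0"
    using assms(3) by simp_all
  have h_exists: "katu_exists \<rho> \<alpha> \<eta> a (\<lambda>t. ?h t powr p) x"
    using assms(10) set_borel_measurable_ratio_majorant_powr[OF interval
        Xpc_set_borel_measurable_closed[OF assms(8,5)] Xpc_set_borel_measurable_closed[OF assms(9,5)]]
    by (rule katu_exists_dominated) (use majorant(3) \<open>p \<ge> 0\<close> in simp)
  have "katu_int \<rho> \<alpha> \<beta> \<eta> \<kappa> a (\<lambda>t. f t powr p) x powr (1 / p)
      \<le> katu_int \<rho> \<alpha> \<beta> \<eta> \<kappa> a (\<lambda>t. ?h t powr p) x powr (1 / p)"
    using majorant(1) \<open>p \<ge> 0\<close>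
    by (intro katu_int_powr_mono[OF assms(1) \<open>1 / p \<ge> 0\<close> assms(10) h_exists]) auto
  moreover have "katu_int \<rho> \<alpha> \<beta> \<eta> \<kappa> a (\<lambda>t. g t powr p) x powr (1 / p)
      \<le> katu_int \<rho> \<alpha> \<beta> \<eta> \<kappa> a (\<lambda>t. ?h t powr p) x powr (1 / p)"
    using majorant(2) \<open>p \<ge> 0\<close>
    by (intro katu_int_powr_mono[OF assms(1) \<open>1 / p \<ge> 0\<close> assms(11) h_exists]) auto
  ultimately show ?thesis
    unfolding Let_def ratio_majorant_def by linarith
qed

end
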